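(* Every finite simple graph admits a rooted tree decomposition.
   Context: A tree decomposition of a graph $G$ is a pair $(T,\mathcal{V})$ with $T$ a tree and $\mathcal{V}=\{V_t\subseteq V(G): t\in V(T)\}$ such that (T1) $\bigcup_t V_t=V(G)$; (T2) every edge $uv$ of $G$ has both ends in some $V_t$; (T3) for each vertex $v$, the nodes $t$ with $v\in V_t$ induce a connected subtree of $T$. Its width is $\max_t|V_t|-1$, and the treewidth of $G$ is the minimum width of a tree decomposition. If $G$ has treewidth $k$, a tree decomposition $(T,\mathcal{V})$ is full if $|V_t|=k+1$ for every node $t$ and $|V_t\cap V_{t'}|=k$ for every edge $tt'$ of $T$. For a rooted tree $(T,r)$ and a node $t\neq r$, $p(t)$ denotes the neighbour of $t$ on the path from $t$ to $r$ (its parent), and the successors of $t$ are the nodes whose parent is $t$. A triple $(\mathcal{V},T,r)$ is a rooted tree decomposition of $G$ if $(T,\mathcal{V})$ is a full tree decomposition of $G$, $r\in V(T)$, and $V_t\cap V_{p(t)}\neq V_t\cap V_{t'}$ for every node $t\neq r$ and every successor $t'$ of $t$. *)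

theory Defs
  imports Main
begin

definition simple_graph :: "'a set \<Rightarrow> 'a set set \<Rightarrow> bool" where
  "simple_graph V E \<longleftrightarrow> E \<subseteq> {{u, v} | u v. u \<noteq> v \<and> u \<in> V \<and> v \<in> V}"

definition finite_simple_graph :: "'a set \<Rightarrow> 'a set set \<Rightarrow> bool" where
  "finite_simple_graph V E \<longleftrightarrow> finite V \<and> simple_graph V E"

definition is_path :: "'a set \<Rightarrow> 'a set set \<Rightarrow> 'a list \<Rightarrow> bool" where
  "is_path V E xs \<longleftrightarrow> xs \<noteq> [] \<and> distinct xs \<and> set xs \<subseteq> V \<and>
     (\<forall>i. Suc i < length xs \<longrightarrow> {xs ! i, xs ! Suc i} \<in> E)"

definition connected_on :: "'a set \<Rightarrow> 'a set set \<Rightarrow> 'a set \<Rightarrow> bool" where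
  "connected_on V E S \<longleftrightarrow>
     (\<forall>u\<in>S. \<forall>v\<in>S. \<exists>xs. is_path V E xs \<and> hd xs = u \<and> last xs = v \<and> set xs \<subseteq> S)"

definition has_cycle :: "'a set \<Rightarrow> 'a set set \<Rightarrow> bool" where
  "has_cycle V E \<longleftrightarrow> (\<exists>xs. is_path V E xs \<and> length xs \<ge> 3 \<and> {last xs, hd xs} \<in> E)"

definition is_tree :: "'b set \<Rightarrow> 'b set set \<Rightarrow> bool" where
  "is_tree N F \<longleftrightarrow> finite N \<and> N \<noteq> {} \<and> simple_graph N F \<and> connected_on N F N \<and> \<not> has_cycle N F"

definition tree_decomp :: "'a set \<Rightarrow> 'a set set \<Rightarrow> 'b set \<Rightarrow> 'b set set \<Rightarrow> ('b \<Rightarrow> 'a set) \<Rightarrow> bool" where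
  "tree_decomp V E N F B \<longleftrightarrow> is_tree N F \<and> (\<forall>t\<in>N. B t \<subseteq> V) \<and>
     (\<Union>t\<in>N. B t) = V \<and>
     (\<forall>e\<in>E. \<exists>t\<in>N. e \<subseteq> B t) \<and>
     (\<forall>v\<in>V. connected_on N F {t\<in>N. v \<in> B t})"

(* width = max bag size - 1 (as an integer, so that the empty graph has width -1) *)
definition td_width :: "'b set \<Rightarrow> ('b \<Rightarrow> 'a set) \<Rightarrow> int" where
  "td_width N B = int (Max ((\<lambda>t. card (B t)) ` N)) - 1"

(* treewidth: minimum width over all tree decompositions (tree nodes taken as naturals;
   every finite tree is isomorphic to one on nat, so this is no restriction) *)
definition treewidth :: "'a set \<Rightarrow> 'a set set \<Rightarrow> int" where
  "treewidth V E = Min {td_width N B | (N :: nat set) F B. tree_decomp V E N F B}"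

definition full_tree_decomp :: "'a set \<Rightarrow> 'a set set \<Rightarrow> 'b set \<Rightarrow> 'b set set \<Rightarrow> ('b \<Rightarrow> 'a set) \<Rightarrow> bool" where
  "full_tree_decomp V E N F B \<longleftrightarrow> tree_decomp V E N F B \<and>
     (\<forall>t\<in>N. int (card (B t)) = treewidth V E + 1) \<and>
     (\<forall>t t'. {t, t'} \<in> F \<longrightarrow> int (card (B t \<inter> B t')) = treewidth V E)"

definition tree_parent :: "'b set \<Rightarrow> 'b set set \<Rightarrow> 'b \<Rightarrow> 'b \<Rightarrow> 'b \<Rightarrow> bool" where
  "tree_parent N F r t s \<longleftrightarrow> t \<in> N \<and> t \<noteq> r \<and>
     (\<exists>xs. is_path N F xs \<and> hd xs = t \<and> last xs = r \<and> length xs \<ge> 2 \<and> xs ! 1 = s)"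

definition rooted_tree_decomp :: "'a set \<Rightarrow> 'a set set \<Rightarrow> 'b set \<Rightarrow> 'b set set \<Rightarrow> ('b \<Rightarrow> 'a set) \<Rightarrow> 'b \<Rightarrow> bool" where
  "rooted_tree_decomp V E N F B r \<longleftrightarrow> full_tree_decomp V E N F B \<and> r \<in> N \<and>
     (\<forall>t s t'. t \<in> N \<and> t \<noteq> r \<and> tree_parent N F r t s \<and> tree_parent N F r t' t
        \<longrightarrow> B t \<inter> B s \<noteq> B t \<inter> B t')"

end

theory Submission
  imports Defs
begin

text \<open>Start from a tree decomposition of minimum width \<open>k\<close> and put \<open>K = k + 1\<close>; all its bags have
  at most \<open>K\<close> vertices. Rebuild it by induction on the number of nodes plus the number of
  vertices, peeling off a leaf \<open>l\<close> with neighbour \<open>p\<close>. If \<open>V\<^sub>l \<subseteq> V\<^sub>p\<close>, the leaf is deleted.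
  Otherwise some vertex \<open>v\<close> lies in \<open>V\<^sub>l\<close> only; delete it, decompose the rest, and reinsert \<open>v\<close>
  in a new bag \<open>{v} \<union> S\<close>, where \<open>S\<close> is a \<open>(K - 1)\<close>-subset of a bag containing \<open>V\<^sub>l - {v}\<close>.
  Numbering the nodes in order of creation and hanging the new node below the first bag
  containing \<open>S\<close> keeps every bag of size \<open>K\<close> and every intersection of adjacent bags of size
  \<open>K - 1\<close>, and makes the intersection of a bag with its parent differ from its intersections
  with its children. Every old bag lies in a new one, so the edges stay covered.\<close>

section \<open>Paths\<close>

lemma is_path_nonempty: "is_path V E xs \<Longrightarrow> xs \<noteq> []"
  by (simp add: is_path_def)

lemma is_path_singleton [simp]: "is_path V E [x] \<longleftrightarrow> x \<in> V"
  by (simp add: is_path_def)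

lemma is_path_nth_edge: "is_path V E xs \<Longrightarrow> Suc i < length xs \<Longrightarrow> {xs ! i, xs ! Suc i} \<in> E"
  by (simp add: is_path_def)

lemma is_path_nth_inj:
  "is_path V E xs \<Longrightarrow> i < length xs \<Longrightarrow> j < length xs \<Longrightarrow> xs ! i = xs ! j \<Longrightarrow> i = j"
  by (simp add: is_path_def nth_eq_iff_index_eq)

lemma is_path_Cons:
  "is_path V E (x # ys) \<longleftrightarrow>
     x \<in> V \<and> x \<notin> set ys \<and> (ys = [] \<or> {x, hd ys} \<in> E \<and> is_path V E ys)"
proof (cases ys)
  case (Cons y zs)
  have "(\<forall>i. Suc i < length (x # ys) \<longrightarrow> {(x # ys) ! i, (x # ys) ! Suc i} \<in> E) \<longleftrightarrow>
        {x, y} \<in> E \<and> (\<forall>i. Suc i < length ys \<longrightarrow> {ys ! i, ys ! Suc i} \<in> E)"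
  proof (intro iffI conjI allI impI)
    fix i assume "\<forall>i. Suc i < length (x # ys) \<longrightarrow> {(x # ys) ! i, (x # ys) ! Suc i} \<in> E"
      and "Suc i < length ys"
    then show "{ys ! i, ys ! Suc i} \<in> E" by (metis Suc_less_eq length_Cons nth_Cons_Suc)
  next
    fix i assume "{x, y} \<in> E \<and> (\<forall>i. Suc i < length ys \<longrightarrow> {ys ! i, ys ! Suc i} \<in> E)"
      and "Suc i < length (x # ys)"
    then show "{(x # ys) ! i, (x # ys) ! Suc i} \<in> E" using Cons by (cases i) auto
  qed (use Cons in auto)
  then show ?thesis using Cons by (auto simp: is_path_def)
qed (simp add: is_path_def)

lemma is_path_drop: "is_path V E xs \<Longrightarrow> k < length xs \<Longrightarrow> is_path V E (drop k xs)"
  by (auto simp: is_path_def dest: in_set_dropD)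

lemma is_path_take: "is_path V E xs \<Longrightarrow> 0 < k \<Longrightarrow> is_path V E (take k xs)"
  by (auto simp: is_path_def dest: in_set_takeD)

lemma is_path_rev:
  assumes "is_path V E xs"
  shows "is_path V E (rev xs)"
proof -
  have "{rev xs ! i, rev xs ! Suc i} \<in> E" if i: "Suc i < length xs" for i
  proof -
    define j where "j = length xs - Suc (Suc i)"
    have "rev xs ! i = xs ! Suc j" "rev xs ! Suc i = xs ! j"
      using i by (simp_all add: rev_nth j_def Suc_diff_Suc)
    moreover have "Suc j < length xs" using i by (simp add: j_def)
    ultimately show ?thesis using is_path_nth_edge[OF assms] by (metis insert_commute)
  qed
  then show ?thesis using assms unfolding is_path_def by auto
qed

lemma is_path_mono: "is_path V E xs \<Longrightarrow> V \<subseteq> V' \<Longrightarrow> E \<subseteq> E' \<Longrightarrow> is_path V' E' xs"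
  unfolding is_path_def by auto

lemma is_path_length_le_card: "is_path V E xs \<Longrightarrow> finite V \<Longrightarrow> length xs \<le> card V"
  unfolding is_path_def by (metis card_mono distinct_card)

lemma is_path_length_ge_2: "is_path V E xs \<Longrightarrow> hd xs \<noteq> last xs \<Longrightarrow> 2 \<le> length xs"
  unfolding is_path_def by (cases xs) (auto simp: Suc_le_eq)

lemma is_path_Cons_shortcut:
  assumes "is_path V E ys" "x \<in> V" "{x, hd ys} \<in> E"
  shows "\<exists>zs. is_path V E zs \<and> hd zs = x \<and> last zs = last ys \<and> set zs \<subseteq> insert x (set ys)"
proof (cases "x \<in> set ys")
  case False
  then show ?thesis using assms is_path_nonempty[OF assms(1)]
    by (intro exI[of _ "x # ys"]) (simp add: is_path_Cons)
next
  case True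
  then obtain k where "k < length ys" "ys ! k = x" by (metis in_set_conv_nth)
  then show ?thesis using assms
    by (intro exI[of _ "drop k ys"]) (auto simp: is_path_drop hd_drop_conv_nth dest: in_set_dropD)
qed

lemma is_path_join:
  assumes "is_path V E xs" "is_path V E zs" "last xs = hd zs"
  shows "\<exists>ws. is_path V E ws \<and> hd ws = hd xs \<and> last ws = last zs \<and> set ws \<subseteq> set xs \<union> set zs"
  using assms
proof (induction xs)
  case (Cons x xs)
  show ?case
  proof (cases "xs = []")
    case True
    then show ?thesis using Cons.prems by (intro exI[of _ zs]) auto
  next
    case False
    then have xs: "is_path V E xs" "{x, hd xs} \<in> E" "x \<in> V"
      using Cons.prems by (auto simp: is_path_Cons)
    obtain ws where ws: "is_path V E ws" "hd ws = hd xs" "last ws = last zs" "set ws \<subseteq> set xs \<union> set zs"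
      using Cons.IH[OF xs(1) Cons.prems(2)] Cons.prems(3) False by auto
    then show ?thesis
      using is_path_Cons_shortcut[OF ws(1) xs(3)] xs(2) by fastforce
  qed
qed (simp add: is_path_def)

lemma connected_on_via_hub:
  assumes "m \<in> S" "\<And>u. u \<in> S \<Longrightarrow> \<exists>xs. is_path V E xs \<and> hd xs = u \<and> last xs = m \<and> set xs \<subseteq> S"
  shows "connected_on V E S"
  unfolding connected_on_def
proof (intro ballI)
  fix u v assume "u \<in> S" "v \<in> S"
  then obtain xs ys where xs: "is_path V E xs" "hd xs = u" "last xs = m" "set xs \<subseteq> S"
    and ys: "is_path V E ys" "hd ys = v" "last ys = m" "set ys \<subseteq> S"
    using assms by meson
  have "is_path V E (rev ys)" "hd (rev ys) = m" "last (rev ys) = v"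
    using is_path_rev[OF ys(1)] ys is_path_nonempty[OF ys(1)] by (auto simp: hd_rev last_rev)
  then show "\<exists>ws. is_path V E ws \<and> hd ws = u \<and> last ws = v \<and> set ws \<subseteq> S"
    using is_path_join[OF xs(1), of "rev ys"] xs ys by fastforce
qed

lemma is_path_max_exists:
  fixes xs :: "'a::linorder list"
  assumes "is_path V E xs"
  obtains i where "i < length xs" "\<forall>j<length xs. xs ! j \<le> xs ! i"
proof -
  have "Max (set xs) \<in> set xs" using is_path_nonempty[OF assms] by simp
  then obtain i where "i < length xs" "xs ! i = Max (set xs)" by (metis in_set_conv_nth)
  then show ?thesis using that by simp
qed

lemma is_path_nth_less_max:
  fixes xs :: "'a::order list"
  assumes "is_path V E xs" "i < length xs" "\<forall>j<length xs. xs ! j \<le> xs ! i" "k < length xs" "k \<noteq> i"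
  shows "xs ! k < xs ! i"
  using assms is_path_nth_inj[OF assms(1) assms(4) assms(2)] by (auto simp: order_less_le)

section \<open>Trees given by parent pointers\<close>

definition parent_edges :: "nat \<Rightarrow> (nat \<Rightarrow> nat) \<Rightarrow> nat set set" where
  "parent_edges n par = {{i, par i} | i. 0 < i \<and> i < n}"

locale parent_tree =
  fixes n :: nat and par :: "nat \<Rightarrow> nat"
  assumes parent_less: "0 < i \<Longrightarrow> i < n \<Longrightarrow> par i < i"
begin

abbreviation "F \<equiv> parent_edges n par"

lemma parent_edgeI: "0 < i \<Longrightarrow> i < n \<Longrightarrow> {i, par i} \<in> F"
  unfolding parent_edges_def by auto

lemma parent_edgeE:
  assumes "{a, b} \<in> F"
  shows "a < n \<and> b < n \<and> (0 < a \<and> b = par a \<or> 0 < b \<and> a = par b)"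
proof -
  obtain i where "{a, b} = {i, par i}" "0 < i" "i < n"
    using assms unfolding parent_edges_def by auto
  then show ?thesis using parent_less[of i] by (auto simp: doubleton_eq_iff)
qed

lemma smaller_neighbour_is_parent:
  assumes "{a, b} \<in> F" "a < b"
  shows "a = par b"
proof (rule ccontr)
  assume "a \<noteq> par b"
  then have "0 < a" "a < n" "b = par a" using parent_edgeE[OF assms(1)] by auto
  then show False using parent_less[of a] assms(2) by simp
qed

lemma simple_graph_parent_edges: "simple_graph {..<n} F"
  unfolding simple_graph_def
proof
  fix e assume "e \<in> F"
  then obtain i where "e = {i, par i}" "0 < i" "i < n" unfolding parent_edges_def by blast
  moreover have "par i < i" using parent_less calculation by simp
  ultimately have "e = {i, par i} \<and> i \<noteq> par i \<and> i \<in> {..<n} \<and> par i \<in> {..<n}" by simp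
  then show "e \<in> {{u, v} |u v. u \<noteq> v \<and> u \<in> {..<n} \<and> v \<in> {..<n}}" by blast
qed

text \<open>Along a path the labels cannot rise and fall again, because both neighbours of a local
  maximum would be its parent.\<close>

lemma path_max_at_end:
  assumes p: "is_path V F xs" and i: "i < length xs" and max: "\<forall>j<length xs. xs ! j \<le> xs ! i"
  shows "i = 0 \<or> i = length xs - 1"
proof (rule ccontr)
  assume "\<not> ?thesis"
  then obtain j where j: "i = Suc j" "Suc (Suc j) < length xs" using i by (cases i) auto
  have less: "xs ! k < xs ! i" if "k < length xs" "k \<noteq> i" for k
    using is_path_nth_less_max[OF p i max that] .
  have "xs ! j = par (xs ! i)"
    using smaller_neighbour_is_parent is_path_nth_edge[OF p, of j] less[of j] j by simp
  moreover have "xs ! Suc (Suc j) = par (xs ! i)"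
    using smaller_neighbour_is_parent is_path_nth_edge[OF p, of "Suc j"] less[of "Suc (Suc j)"] j
    by (simp add: insert_commute)
  ultimately show False using is_path_nth_inj[OF p, of j "Suc (Suc j)"] j by simp
qed

lemma no_cycle_parent_edges: "\<not> has_cycle V F"
proof
  assume "has_cycle V F"
  then obtain xs where p: "is_path V F xs" and l: "length xs \<ge> 3" and c: "{last xs, hd xs} \<in> F"
    unfolding has_cycle_def by auto
  define L where "L = length xs"
  obtain i where i: "i < L" and max: "\<forall>j<L. xs ! j \<le> xs ! i"
    using is_path_max_exists[OF p] L_def by metis
  have less: "xs ! k < xs ! i" if "k < L" "k \<noteq> i" for k
    using is_path_nth_less_max[OF p _ _ _ that(2)] i max that(1) L_def by blast
  have ends: "hd xs = xs ! 0" "last xs = xs ! (L - 1)"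
    using is_path_nonempty[OF p] by (auto simp: hd_conv_nth last_conv_nth L_def)
  have "i = 0 \<or> i = L - 1" using path_max_at_end[OF p] i max L_def by blast
  then show False
  proof
    assume i0: "i = 0"
    have "{xs ! 1, xs ! 0} \<in> F" "{xs ! (L - 1), xs ! 0} \<in> F"
      using is_path_nth_edge[OF p, of 0] c ends l L_def by (simp_all add: insert_commute)
    moreover have "xs ! 1 < xs ! 0" "xs ! (L - 1) < xs ! 0"
      using less[of 1] less[of "L - 1"] i0 l L_def by simp_all
    ultimately have "xs ! 1 = xs ! (L - 1)" using smaller_neighbour_is_parent by metis
    moreover have "1 < L" "L - 1 < L" "1 \<noteq> L - 1" using l L_def by auto
    ultimately show False using is_path_nth_inj[OF p, of 1 "L - 1"] L_def by simp
  next
    assume iL: "i = L - 1"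
    have "{xs ! (L - 2), xs ! (L - 1)} \<in> F" "{xs ! 0, xs ! (L - 1)} \<in> F"
      using is_path_nth_edge[OF p, of "L - 2"] c ends l L_def
      by (simp_all add: Suc_diff_Suc numeral_2_eq_2 insert_commute)
    moreover have "xs ! (L - 2) < xs ! (L - 1)" "xs ! 0 < xs ! (L - 1)"
      using less[of "L - 2"] less[of 0] iL l L_def is_path_nonempty[OF p] by simp_all
    ultimately have "xs ! (L - 2) = xs ! 0" using smaller_neighbour_is_parent by metis
    moreover have "L - 2 < L" "L - 2 \<noteq> 0" using l L_def by auto
    ultimately show False using is_path_nth_inj[OF p, of "L - 2" 0] is_path_nonempty[OF p] L_def by simp
  qed
qed

lemma tree_parent_imp_parent:
  assumes "tree_parent {..<n} F 0 t s"
  shows "s = par t"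
proof -
  obtain xs where p: "is_path {..<n} F xs" and xs: "hd xs = t" "last xs = 0" "length xs \<ge> 2" "xs ! 1 = s"
    and t: "t \<noteq> 0"
    using assms unfolding tree_parent_def by auto
  obtain i where i: "i < length xs" and max: "\<forall>j<length xs. xs ! j \<le> xs ! i"
    using is_path_max_exists[OF p] by metis
  have ne: "xs \<noteq> []" using is_path_nonempty[OF p] .
  have ends: "xs ! 0 = t" "xs ! (length xs - 1) = 0"
    using xs hd_conv_nth[OF ne] last_conv_nth[OF ne] by simp_all
  have "i \<noteq> length xs - 1"
  proof
    assume "i = length xs - 1"
    moreover have "0 < length xs" using ne by simp
    ultimately have "xs ! 0 \<le> xs ! i" using max by blast
    then show False using ends t \<open>i = length xs - 1\<close> by simp
  qed
  then have "i = 0" using path_max_at_end[OF p i max] by simp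
  moreover have "xs ! 1 \<noteq> xs ! 0" using is_path_nth_inj[OF p, of 1 0] xs(3) ne by auto
  moreover have "xs ! 1 \<le> xs ! 0" using max[rule_format, of 1] xs(3) \<open>i = 0\<close> by simp
  ultimately have "s < t" using ends xs by simp
  then show ?thesis
    using smaller_neighbour_is_parent is_path_nth_edge[OF p, of 0] ends xs
    by (simp add: insert_commute)
qed

text \<open>Every member of \<open>S\<close> reaches the least one by climbing to parents.\<close>

lemma connected_on_parent_closed:
  assumes S: "S \<subseteq> {..<n}" and closed: "\<And>i j. i \<in> S \<Longrightarrow> j \<in> S \<Longrightarrow> j < i \<Longrightarrow> par i \<in> S"
  shows "connected_on {..<n} F S"
proof (cases "S = {}")
  case True
  then show ?thesis by (simp add: connected_on_def)
next
  case False
  have fin: "finite S" using S finite_subset by blast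
  define m where "m = Min S"
  have mS: "m \<in> S" and m_le: "\<And>u. u \<in> S \<Longrightarrow> m \<le> u" using fin False by (simp_all add: m_def)
  have "\<exists>xs. is_path {..<n} F xs \<and> hd xs = u \<and> last xs = m \<and> set xs \<subseteq> S \<and> (\<forall>y\<in>set xs. y \<le> u)"
    if "u \<in> S" for u
    using that
  proof (induction u rule: less_induct)
    case (less u)
    show ?case
    proof (cases "u = m")
      case True
      then show ?thesis using less.prems S by (intro exI[of _ "[m]"]) auto
    next
      case False
      then have mu: "m < u" and un: "u < n" using m_le[OF less.prems] less.prems S by auto
      then have pu: "par u < u" using parent_less by simp
      obtain ys where ys: "is_path {..<n} F ys" "hd ys = par u" "last ys = m" "set ys \<subseteq> S"
        "\<forall>y\<in>set ys. y \<le> par u"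
        using less.IH[OF pu closed[OF less.prems mS mu]] by blast
      have "is_path {..<n} F (u # ys)"
        using ys is_path_nonempty[OF ys(1)] un pu parent_edgeI[of u] mu
        by (auto simp: is_path_Cons insert_commute)
      then show ?thesis using ys is_path_nonempty[OF ys(1)] less.prems pu
        by (intro exI[of _ "u # ys"]) auto
    qed
  qed
  then show ?thesis using connected_on_via_hub[OF mS] by blast
qed

lemma is_tree_parent_edges:
  assumes "0 < n"
  shows "is_tree {..<n} F"
proof -
  have "connected_on {..<n} F {..<n}"
  proof (rule connected_on_parent_closed)
    fix i j assume "i \<in> {..<n}" "j \<in> {..<n}" "j < i"
    then show "par i \<in> {..<n}" using parent_less[of i] by simp
  qed simp
  then show ?thesis
    unfolding is_tree_def using assms simple_graph_parent_edges no_cycle_parent_edges by auto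
qed

end

section \<open>Leaves\<close>

definition is_leaf :: "'b set set \<Rightarrow> 'b \<Rightarrow> 'b \<Rightarrow> bool" where
  "is_leaf F l p \<longleftrightarrow> {l, p} \<in> F \<and> (\<forall>q. {l, q} \<in> F \<longrightarrow> q = p)"

lemma simple_graph_edgeD: "simple_graph N F \<Longrightarrow> {a, b} \<in> F \<Longrightarrow> a \<noteq> b \<and> a \<in> N \<and> b \<in> N"
  unfolding simple_graph_def by (auto simp: doubleton_eq_iff)

text \<open>The first node of a longest path is a leaf: a second neighbour would either extend the
  path or close a cycle.\<close>

lemma tree_has_leaf:
  assumes T: "is_tree N F" and ab: "a \<in> N" "b \<in> N" "a \<noteq> b"
  shows "\<exists>l p. l \<in> N \<and> is_leaf F l p"
proof -
  have fin: "finite N" and sg: "simple_graph N F" and nc: "\<not> has_cycle N F"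
    and cn: "connected_on N F N"
    using T unfolding is_tree_def by auto
  let ?P = "\<lambda>xs. is_path N F xs \<and> 2 \<le> length xs"
  obtain xs0 where "is_path N F xs0" "hd xs0 = a" "last xs0 = b"
    using cn ab unfolding connected_on_def by blast
  then have "?P xs0" using is_path_length_ge_2 ab by auto
  moreover have "\<forall>ys. ?P ys \<longrightarrow> length ys < card N + 1" using is_path_length_le_card fin by fastforce
  ultimately obtain xs where xs: "?P xs" and longest: "\<And>ys. ?P ys \<Longrightarrow> length ys \<le> length xs"
    using ex_has_greatest_nat[of ?P xs0 length "card N + 1"] by blast
  have ne: "xs \<noteq> []" using xs by auto
  define l where "l = xs ! 0"
  define p where "p = xs ! 1"
  have hd: "hd xs = l" using ne l_def hd_conv_nth by auto
  have lp: "{l, p} \<in> F" using is_path_nth_edge[of N F xs 0] xs l_def p_def by auto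
  have "q = p" if q: "{l, q} \<in> F" for q
  proof (rule ccontr)
    assume qp: "q \<noteq> p"
    have qN: "q \<in> N" and ql: "q \<noteq> l" using simple_graph_edgeD[OF sg q] by auto
    show False
    proof (cases "q \<in> set xs")
      case False
      then have "is_path N F (q # xs)" using xs qN q hd ne by (auto simp: is_path_Cons insert_commute)
      then show False using longest[of "q # xs"] xs by auto
    next
      case True
      then obtain j where j: "j < length xs" "xs ! j = q" by (metis in_set_conv_nth)
      have "2 \<le> j" using j ql qp l_def p_def by (cases j; cases "j - 1") auto
      moreover have "take (Suc j) xs = take j xs @ [q]" using j by (simp add: take_Suc_conv_app_nth)
      ultimately have "is_path N F (take (Suc j) xs) \<and> length (take (Suc j) xs) \<ge> 3 \<and>
          {last (take (Suc j) xs), hd (take (Suc j) xs)} \<in> F"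
        using is_path_take[of N F xs "Suc j"] xs j q hd ne by (auto simp: insert_commute)
      then show False using nc unfolding has_cycle_def by blast
    qed
  qed
  then show ?thesis using simple_graph_edgeD[OF sg lp] lp unfolding is_leaf_def by blast
qed

lemma leaf_not_in_path:
  assumes lf: "is_leaf F l p" and p: "is_path N F xs" and ends: "hd xs \<noteq> l" "last xs \<noteq> l"
  shows "l \<notin> set xs"
proof
  assume "l \<in> set xs"
  then obtain i where i: "i < length xs" "xs ! i = l" by (metis in_set_conv_nth)
  have ne: "xs \<noteq> []" using is_path_nonempty[OF p] .
  have "i \<noteq> 0" using i ends(1) by (metis hd_conv_nth ne)
  moreover have "i \<noteq> length xs - 1" using i ends(2) by (metis last_conv_nth ne)
  ultimately obtain j where j: "i = Suc j" "Suc (Suc j) < length xs" using i by (cases i) auto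
  have "{l, xs ! j} \<in> F" "{l, xs ! Suc (Suc j)} \<in> F"
    using is_path_nth_edge[OF p, of j] is_path_nth_edge[OF p, of "Suc j"] i j
    by (simp_all add: insert_commute)
  then have "xs ! j = xs ! Suc (Suc j)" using lf unfolding is_leaf_def by blast
  then show False using is_path_nth_inj[OF p, of j "Suc (Suc j)"] j by simp
qed

lemma leaf_neighbour_in_path:
  assumes lf: "is_leaf F l p" and p: "is_path N F xs" and ends: "hd xs = l" "last xs \<noteq> l"
  shows "p \<in> set xs"
proof -
  have L: "2 \<le> length xs" using is_path_length_ge_2[OF p] ends by simp
  then have "{l, xs ! 1} \<in> F"
    using is_path_nth_edge[OF p, of 0] ends hd_conv_nth[OF is_path_nonempty[OF p]] by simp
  then have "xs ! 1 = p" using lf unfolding is_leaf_def by blast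
  then show ?thesis using L by (metis Suc_1 Suc_le_lessD nth_mem)
qed

lemma connected_on_remove_leaf:
  assumes "connected_on N F S" "is_leaf F l p"
  shows "connected_on (N - {l}) {e \<in> F. l \<notin> e} (S - {l})"
  unfolding connected_on_def
proof (intro ballI)
  fix u v assume uv: "u \<in> S - {l}" "v \<in> S - {l}"
  then obtain xs where xs: "is_path N F xs" "hd xs = u" "last xs = v" "set xs \<subseteq> S"
    using assms(1) unfolding connected_on_def by blast
  have "l \<notin> set xs" using leaf_not_in_path[OF assms(2) xs(1)] xs uv by auto
  then have "is_path (N - {l}) {e \<in> F. l \<notin> e} xs"
    using xs(1) unfolding is_path_def by auto
  then show "\<exists>xs. is_path (N - {l}) {e \<in> F. l \<notin> e} xs \<and> hd xs = u \<and> last xs = v \<and>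
      set xs \<subseteq> S - {l}"
    using xs \<open>l \<notin> set xs\<close> by blast
qed

lemma is_tree_remove_leaf:
  assumes T: "is_tree N F" and lf: "is_leaf F l p"
  shows "is_tree (N - {l}) {e \<in> F. l \<notin> e}"
proof -
  have sg: "simple_graph N F" and cn: "connected_on N F N" and nc: "\<not> has_cycle N F"
    using T unfolding is_tree_def by auto
  have "p \<in> N - {l}" using simple_graph_edgeD[OF sg] lf unfolding is_leaf_def by blast
  moreover have "simple_graph (N - {l}) {e \<in> F. l \<notin> e}"
    using sg unfolding simple_graph_def by blast
  moreover have "\<not> has_cycle (N - {l}) {e \<in> F. l \<notin> e}"
    using nc is_path_mono[of "N - {l}" "{e \<in> F. l \<notin> e}" _ N F] unfolding has_cycle_def by blast
  ultimately show ?thesis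
    using T connected_on_remove_leaf[OF cn lf] unfolding is_tree_def by auto
qed

section \<open>Decompositions numbered in order of creation\<close>

text \<open>Assumption \<open>bag_parent_closed\<close> yields (T3) via \<open>connected_on_parent_closed\<close>.\<close>

locale ordered_decomp = parent_tree n par
  for n :: nat and par :: "nat \<Rightarrow> nat" +
  fixes V :: "'a set" and K :: nat and B :: "nat \<Rightarrow> 'a set"
  assumes root_node: "0 < n"
    and bag_subset: "i < n \<Longrightarrow> B i \<subseteq> V"
    and card_bag: "i < n \<Longrightarrow> card (B i) = K"
    and card_separator: "0 < i \<Longrightarrow> i < n \<Longrightarrow> card (B i \<inter> B (par i)) + 1 = K"
    and separators_differ:
      "0 < i \<Longrightarrow> 0 < j \<Longrightarrow> j < n \<Longrightarrow> par j = i \<Longrightarrow> B i \<inter> B (par i) \<noteq> B i \<inter> B j"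
    and bag_parent_closed: "0 < i \<Longrightarrow> i < n \<Longrightarrow> j < i \<Longrightarrow> x \<in> B i \<Longrightarrow> x \<in> B j \<Longrightarrow> x \<in> B (par i)"
    and Union_bags: "(\<Union>i<n. B i) = V"

lemma ordered_decomp_single_bag: "ordered_decomp 1 (\<lambda>_. 0) V (card V) (\<lambda>_. V)"
  by unfold_locales auto

context ordered_decomp
begin

context
  fixes v S u
  assumes v: "v \<notin> V" and u: "u < n" "S \<subseteq> B u" and first: "\<forall>w<u. \<not> S \<subseteq> B w"
    and S: "card S + 1 = K"
begin

lemma not_in_bags: "i < n \<Longrightarrow> v \<notin> B i"
  using bag_subset v by blast

lemma attached_separator: "insert v S \<inter> B u = S"
  using u not_in_bags by blast

text \<open>Because \<open>u\<close> is the first node whose bag contains \<open>S\<close>, the bag of \<open>par u\<close> does not, so the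
  separator \<open>S\<close> of the new node differs from the separator of \<open>u\<close> towards its parent.\<close>

lemma attached_separators_differ:
  assumes ij: "0 < i" "0 < j" "j < Suc n" "(par(n := u)) j = i"
  shows "(B(n := insert v S)) i \<inter> (B(n := insert v S)) ((par(n := u)) i) \<noteq>
    (B(n := insert v S)) i \<inter> (B(n := insert v S)) j"
proof -
  have i: "i < n" "par i < i" using ij parent_less[of j] parent_less[of i] u
    by (cases "j = n"; auto simp: less_Suc_eq)+
  show ?thesis
  proof (cases "j = n")
    case True
    then have "i = u" using ij by simp
    then have "\<not> S \<subseteq> B (par i)" using first i(2) by blast
    then show ?thesis using True \<open>i = u\<close> i attached_separator by auto
  next
    case False
    then show ?thesis using separators_differ[OF ij(1,2)] ij(3,4) i by simp
  qed
qed

lemma attached_bag_parent_closed: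
  assumes ij: "0 < i" "i < Suc n" "j < i" "x \<in> (B(n := insert v S)) i" "x \<in> (B(n := insert v S)) j"
  shows "x \<in> (B(n := insert v S)) ((par(n := u)) i)"
proof (cases "i = n")
  case True
  then show ?thesis using ij not_in_bags u(2) by auto
next
  case False
  then have "i < n" using ij(2) by simp
  then show ?thesis using False ij bag_parent_closed[of i j x] parent_less[OF ij(1)] by simp
qed

lemma attach_bag: "ordered_decomp (Suc n) (par(n := u)) (insert v V) K (B(n := insert v S))"
proof -
  have "finite (B u)" using card_bag[OF u(1)] S by (metis card.infinite add_is_0 one_neq_zero)
  then have finS: "finite S" using u(2) finite_subset by blast
  have vS: "v \<notin> S" using u not_in_bags by blast
  show ?thesis
  proof unfold_locales
    fix i assume "0 < i" "i < Suc n"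
    then show "(par(n := u)) i < i" using parent_less u by (auto simp: less_Suc_eq)
  next
    fix i assume "i < Suc n"
    then show "(B(n := insert v S)) i \<subseteq> insert v V" "card ((B(n := insert v S)) i) = K"
      using bag_subset card_bag u(2) bag_subset[OF u(1)] finS vS S by (auto simp: less_Suc_eq)
  next
    fix i assume i: "0 < i" "i < Suc n"
    show "card ((B(n := insert v S)) i \<inter> (B(n := insert v S)) ((par(n := u)) i)) + 1 = K"
    proof (cases "i = n")
      case True
      then show ?thesis using attached_separator S u(1) by simp
    next
      case False
      then show ?thesis using card_separator[of i] parent_less[of i] i by simp
    qed
  next
    show "(\<Union>i<Suc n. (B(n := insert v S)) i) = insert v V"
      using Union_bags u(2) bag_subset[OF u(1)] by (auto simp: lessThan_Suc)
  qed (rule attached_separators_differ attached_bag_parent_closed | assumption | simp)+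
qed

end

lemma insert_vertex:
  assumes v: "v \<notin> V" and A: "A \<subseteq> B s" "s < n" "card A < K"
  shows "\<exists>n' par' B'. ordered_decomp n' par' (insert v V) K B' \<and>
    (\<forall>i<n. \<exists>j<n'. B i \<subseteq> B' j) \<and> (\<exists>j<n'. insert v A \<subseteq> B' j)"
proof -
  have "finite (B s)" using card_bag[OF A(2)] A(3) by (metis card.infinite not_less0)
  moreover have "card A \<le> K - 1" "K - 1 \<le> card (B s)" using A(3) card_bag[OF A(2)] by auto
  ultimately obtain S where S: "A \<subseteq> S" "S \<subseteq> B s" "card S = K - 1"
    using exists_subset_between[of A "K - 1" "B s"] A(1) by blast
  then have "card S + 1 = K" using A(3) by simp
  obtain u where u: "u < n" "S \<subseteq> B u" and first: "\<forall>w<u. \<not> S \<subseteq> B w"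
    using exists_least_iff[of "\<lambda>u. u < n \<and> S \<subseteq> B u"] S(2) A(2) by (metis order.strict_trans)
  have "ordered_decomp (Suc n) (par(n := u)) (insert v V) K (B(n := insert v S))"
    using attach_bag[OF v u first \<open>card S + 1 = K\<close>] .
  moreover have "\<forall>i<n. \<exists>j<Suc n. B i \<subseteq> (B(n := insert v S)) j" by auto
  moreover have "insert v A \<subseteq> (B(n := insert v S)) n" using S(1) by auto
  ultimately show ?thesis by blast
qed

end

section \<open>Rebuilding a decomposition with bags of at most \<open>K\<close> vertices\<close>

text \<open>Condition (T2) is dropped: the rebuilt decomposition inherits it because every old bag
  ends up inside a new one.\<close>

definition bounded_decomp :: "'b set \<Rightarrow> 'b set set \<Rightarrow> ('b \<Rightarrow> 'a set) \<Rightarrow> 'a set \<Rightarrow> nat \<Rightarrow> bool" where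
  "bounded_decomp N F B V K \<longleftrightarrow> is_tree N F \<and> finite V \<and> K \<le> card V \<and>
     (\<forall>t\<in>N. B t \<subseteq> V \<and> card (B t) \<le> K) \<and> (\<Union>t\<in>N. B t) = V \<and>
     (\<forall>v\<in>V. connected_on N F {t\<in>N. v \<in> B t})"

lemma bounded_decomp_remove_leaf:
  assumes D: "bounded_decomp N F B V K" and lf: "is_leaf F l p" and sub: "B l \<subseteq> B p"
  shows "bounded_decomp (N - {l}) {e \<in> F. l \<notin> e} B V K"
proof -
  have T: "is_tree N F" and un: "(\<Union>t\<in>N. B t) = V"
    and cn: "\<And>v. v \<in> V \<Longrightarrow> connected_on N F {t\<in>N. v \<in> B t}"
    using D unfolding bounded_decomp_def by auto
  have "p \<in> N - {l}"
    using simple_graph_edgeD[of N F l p] T lf unfolding is_tree_def is_leaf_def by auto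
  then have "(\<Union>t\<in>N - {l}. B t) = V" using un sub by blast
  moreover have "connected_on (N - {l}) {e \<in> F. l \<notin> e} {t \<in> N - {l}. v \<in> B t}" if "v \<in> V" for v
  proof -
    have "{t \<in> N - {l}. v \<in> B t} = {t\<in>N. v \<in> B t} - {l}" by blast
    then show ?thesis using connected_on_remove_leaf[OF cn[OF that] lf] by simp
  qed
  ultimately show ?thesis
    using D is_tree_remove_leaf[OF T lf] unfolding bounded_decomp_def by blast
qed

lemma bounded_decomp_remove_vertex:
  assumes D: "bounded_decomp N F B V K" and l: "l \<in> N"
    and v: "v \<in> B l" "\<forall>t\<in>N - {l}. v \<notin> B t" and K: "K < card V"
  shows "bounded_decomp N F (B(l := B l - {v})) (V - {v}) K"
proof -
  have finV: "finite V" and bags: "\<And>t. t \<in> N \<Longrightarrow> B t \<subseteq> V \<and> card (B t) \<le> K"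
    and un: "(\<Union>t\<in>N. B t) = V" and cn: "\<And>x. x \<in> V \<Longrightarrow> connected_on N F {t\<in>N. x \<in> B t}"
    using D unfolding bounded_decomp_def by auto
  let ?B = "B(l := B l - {v})"
  have "card (B l - {v}) \<le> K" using bags[OF l] card_Diff1_le[of "B l" v] by linarith
  then have "\<forall>t\<in>N. ?B t \<subseteq> V - {v} \<and> card (?B t) \<le> K" using bags v by auto
  moreover have "(\<Union>t\<in>N. ?B t) = V - {v}" using un v l by auto
  moreover have "connected_on N F {t\<in>N. x \<in> ?B t}" if "x \<in> V - {v}" for x
  proof -
    have "{t\<in>N. x \<in> ?B t} = {t\<in>N. x \<in> B t}" using that by auto
    then show ?thesis using cn that by simp
  qed
  moreover have "K \<le> card (V - {v})" using K v(1) bags[OF l] finV by auto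
  ultimately show ?thesis using D finV unfolding bounded_decomp_def by blast
qed

text \<open>The nodes whose bags contain \<open>v\<close> are connected, and every path leaving \<open>l\<close> passes
  through \<open>p\<close>.\<close>

lemma leaf_private_vertex:
  assumes D: "bounded_decomp N F B V K" and lf: "is_leaf F l p" "l \<in> N"
    and v: "v \<in> B l" "v \<notin> B p"
  shows "\<forall>t\<in>N - {l}. v \<notin> B t"
proof
  fix t assume t: "t \<in> N - {l}"
  show "v \<notin> B t"
  proof
    assume "v \<in> B t"
    moreover have "v \<in> V" "connected_on N F {t\<in>N. v \<in> B t}"
      using D lf(2) v(1) unfolding bounded_decomp_def by blast+
    ultimately obtain xs where "is_path N F xs" "hd xs = l" "last xs = t"
      "set xs \<subseteq> {t\<in>N. v \<in> B t}"
      using lf(2) v(1) t unfolding connected_on_def by blast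
    then show False using leaf_neighbour_in_path[OF lf(1)] t v(2) by blast
  qed
qed

lemma bounded_decomp_has_leaf:
  assumes D: "bounded_decomp N F B V K" and K: "K < card V"
  obtains l p where "l \<in> N" "is_leaf F l p" "p \<in> N - {l}"
proof -
  have T: "is_tree N F" and bags: "\<And>t. t \<in> N \<Longrightarrow> card (B t) \<le> K"
    and un: "(\<Union>t\<in>N. B t) = V"
    using D unfolding bounded_decomp_def by auto
  have "\<exists>a\<in>N. \<exists>b\<in>N. a \<noteq> b"
  proof (rule ccontr)
    assume "\<not> ?thesis"
    then obtain t where "N = {t}" using T unfolding is_tree_def by blast
    then show False using un bags[of t] K by auto
  qed
  then obtain l p where "l \<in> N" "is_leaf F l p" using tree_has_leaf[OF T] by blast
  moreover have "p \<in> N - {l}"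
    using simple_graph_edgeD[of N F l p] T \<open>is_leaf F l p\<close> unfolding is_tree_def is_leaf_def by auto
  ultimately show ?thesis using that by blast
qed

lemma ordered_decomp_reinsert_vertex:
  assumes D: "ordered_decomp n par (V - {v}) K B'" and v: "v \<in> B l" "v \<in> V"
    and l: "l \<in> N" "finite (B l)" "card (B l) \<le> K"
    and cover: "\<forall>t\<in>N. \<exists>i<n. (B(l := B l - {v})) t \<subseteq> B' i"
  shows "\<exists>n' par' B''. ordered_decomp n' par' V K B'' \<and> (\<forall>t\<in>N. \<exists>j<n'. B t \<subseteq> B'' j)"
proof -
  have "\<exists>s<n. (B(l := B l - {v})) l \<subseteq> B' s" using cover l(1) by blast
  then obtain s where s: "s < n" "B l - {v} \<subseteq> B' s" by auto
  have card_less: "card (B l - {v}) < K" using card_Diff1_less[OF l(2) v(1)] l(3) by linarith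
  have "v \<notin> V - {v}" by simp
  from ordered_decomp.insert_vertex[OF D this s(2) s(1) card_less]
  obtain n' par' B'' where D': "ordered_decomp n' par' (insert v (V - {v})) K B''"
    and old: "\<forall>i<n. \<exists>j<n'. B' i \<subseteq> B'' j" and new: "\<exists>j<n'. insert v (B l - {v}) \<subseteq> B'' j"
    by metis
  have "\<exists>j<n'. B t \<subseteq> B'' j" if t: "t \<in> N" for t
  proof (cases "t = l")
    case True
    then have "B t \<subseteq> insert v (B l - {v})" by blast
    then show ?thesis using new by (meson order_trans)
  next
    case False
    have "\<exists>i<n. (B(l := B l - {v})) t \<subseteq> B' i" using cover t by blast
    then obtain i where "i < n" "B t \<subseteq> B' i" using False by auto
    then show ?thesis using old by blast
  qed
  moreover have "ordered_decomp n' par' V K B''" using D' insert_Diff[OF v(2)] by simp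
  ultimately show ?thesis by blast
qed

lemma bounded_decomp_imp_ordered_decomp:
  assumes "bounded_decomp N F B V K"
  shows "\<exists>n par B'. ordered_decomp n par V K B' \<and> (\<forall>t\<in>N. \<exists>i<n. B t \<subseteq> B' i)"
  using assms
proof (induction "card N + card V" arbitrary: N F B V rule: less_induct)
  case less
  have finN: "finite N" and finV: "finite V" and bags: "\<And>t. t \<in> N \<Longrightarrow> B t \<subseteq> V \<and> card (B t) \<le> K"
    using less.prems unfolding bounded_decomp_def is_tree_def by auto
  show ?case
  proof (cases "card V = K")
    case True
    have "ordered_decomp 1 (\<lambda>_. 0) V K (\<lambda>_. V)" using ordered_decomp_single_bag[of V] True by simp
    moreover have "\<forall>t\<in>N. \<exists>i<1::nat. B t \<subseteq> V" using bags by auto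
    ultimately show ?thesis by blast
  next
    case False
    then have K: "K < card V" using less.prems unfolding bounded_decomp_def by simp
    obtain l p where l: "l \<in> N" and lf: "is_leaf F l p" and p: "p \<in> N - {l}"
      using bounded_decomp_has_leaf[OF less.prems K] .
    show ?thesis
    proof (cases "B l \<subseteq> B p")
      case True
      have "card (N - {l}) + card V < card N + card V" using card_Diff1_less[OF finN l] by simp
      from less.hyps[OF this bounded_decomp_remove_leaf[OF less.prems lf True]]
      obtain n par B' where D: "ordered_decomp n par V K B'"
        and cover: "\<forall>t\<in>N - {l}. \<exists>i<n. B t \<subseteq> B' i"
        by blast
      have "\<exists>i<n. B t \<subseteq> B' i" if t: "t \<in> N" for t
      proof (cases "t = l")
        case True
        obtain i where "i < n" "B p \<subseteq> B' i" using cover p by blast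
        then show ?thesis using \<open>t = l\<close> \<open>B l \<subseteq> B p\<close> by blast
      qed (use cover t in blast)
      then show ?thesis using D by blast
    next
      case False
      then obtain v where v: "v \<in> B l" "v \<notin> B p" by blast
      have vV: "v \<in> V" using bags[OF l] v by blast
      have "card N + card (V - {v}) < card N + card V" using card_Diff1_less[OF finV vV] by simp
      from less.hyps[OF this bounded_decomp_remove_vertex[OF less.prems l v(1)
            leaf_private_vertex[OF less.prems lf l v] K]]
      obtain n par B' where D: "ordered_decomp n par (V - {v}) K B'"
        and cover: "\<forall>t\<in>N. \<exists>i<n. (B(l := B l - {v})) t \<subseteq> B' i"
        by blast
      have "finite (B l)" using bags[OF l] finV finite_subset by blast
      with bags[OF l] show ?thesis using ordered_decomp_reinsert_vertex[OF D v(1) vV l _ _ cover] by blast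
    qed
  qed
qed

section \<open>The rooted tree decomposition\<close>

context ordered_decomp
begin

lemma tree_decomp:
  assumes edges: "\<forall>e\<in>E. \<exists>i<n. e \<subseteq> B i"
  shows "tree_decomp V E {..<n} F B"
proof -
  have "connected_on {..<n} F {t \<in> {..<n}. x \<in> B t}" for x
  proof (rule connected_on_parent_closed)
    fix i j assume "i \<in> {t \<in> {..<n}. x \<in> B t}" "j \<in> {t \<in> {..<n}. x \<in> B t}" "j < i"
    then show "par i \<in> {t \<in> {..<n}. x \<in> B t}"
      using bag_parent_closed[of i j x] parent_less[of i] by auto
  qed auto
  moreover have "\<forall>e\<in>E. \<exists>t\<in>{..<n}. e \<subseteq> B t" using edges by blast
  ultimately show ?thesis
    unfolding tree_decomp_def
    using is_tree_parent_edges[OF root_node] bag_subset Union_bags by blast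
qed

lemma full_tree_decomp:
  assumes edges: "\<forall>e\<in>E. \<exists>i<n. e \<subseteq> B i" and K: "int K = treewidth V E + 1"
  shows "full_tree_decomp V E {..<n} F B"
proof -
  have "int (card (B t \<inter> B t')) = treewidth V E" if "{t, t'} \<in> F" for t t'
  proof -
    have sep: "int (card (B i \<inter> B (par i))) = treewidth V E" if "0 < i" "i < n" for i
      using card_separator[OF that] K by linarith
    show ?thesis
      using parent_edgeE[OF that] sep[of t] sep[of t'] by (auto simp: Int_commute)
  qed
  then show ?thesis
    unfolding full_tree_decomp_def using tree_decomp[OF edges] card_bag K by auto
qed

lemma rooted_tree_decomp:
  assumes edges: "\<forall>e\<in>E. \<exists>i<n. e \<subseteq> B i" and K: "int K = treewidth V E + 1"
  shows "rooted_tree_decomp V E {..<n} F B 0"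
  unfolding rooted_tree_decomp_def
proof (intro conjI allI impI)
  show "full_tree_decomp V E {..<n} F B" using full_tree_decomp[OF edges K] .
  show "0 \<in> {..<n}" using root_node by simp
  fix t s t'
  assume "t \<in> {..<n} \<and> t \<noteq> 0 \<and> tree_parent {..<n} F 0 t s \<and> tree_parent {..<n} F 0 t' t"
  then have "s = par t" "t = par t'" "0 < t" "0 < t'" "t' < n"
    using tree_parent_imp_parent unfolding tree_parent_def by auto
  then show "B t \<inter> B s \<noteq> B t \<inter> B t'" using separators_differ by blast
qed

end

lemma tree_decomp_single_bag:
  assumes "simple_graph V E"
  shows "tree_decomp V E {0::nat} {} (\<lambda>_. V)"
proof -
  have "connected_on {0::nat} {} {0}" by (rule connected_on_via_hub[of 0]) (auto intro!: exI[of _ "[0]"])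
  moreover have "\<not> has_cycle {0::nat} {}" by (auto simp: has_cycle_def is_path_def)
  moreover have "\<forall>e\<in>E. e \<subseteq> V" using assms unfolding simple_graph_def by auto
  ultimately show ?thesis unfolding tree_decomp_def is_tree_def simple_graph_def by auto
qed

lemma card_bag_le_td_width: "finite N \<Longrightarrow> t \<in> N \<Longrightarrow> int (card (B t)) \<le> td_width N B + 1"
  unfolding td_width_def by simp

lemma td_width_bounds:
  assumes "tree_decomp V E N F B" "finite V"
  shows "-1 \<le> td_width N B \<and> td_width N B \<le> int (card V) - 1"
proof -
  have "finite N" "N \<noteq> {}" using assms(1) unfolding tree_decomp_def is_tree_def by auto
  moreover have "\<forall>t\<in>N. card (B t) \<le> card V"
    using assms unfolding tree_decomp_def by (simp add: card_mono)
  ultimately have "Max ((\<lambda>t. card (B t)) ` N) \<le> card V" by simp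
  then show ?thesis unfolding td_width_def by simp
qed

lemma treewidth_attained:
  assumes "finite_simple_graph V E"
  shows "\<exists>(N :: nat set) F B. tree_decomp V E N F B \<and> td_width N B = treewidth V E"
proof -
  define W where "W = {td_width N B | (N :: nat set) F B. tree_decomp V E N F B}"
  have finV: "finite V" and sg: "simple_graph V E"
    using assms unfolding finite_simple_graph_def by auto
  have "W \<subseteq> {-1 .. int (card V) - 1}"
  proof
    fix w assume "w \<in> W"
    then obtain N :: "nat set" and F B where "tree_decomp V E N F B" "w = td_width N B"
      unfolding W_def by blast
    then show "w \<in> {-1 .. int (card V) - 1}" using td_width_bounds finV by simp
  qed
  then have "finite W" using finite_subset by blast
  moreover have "W \<noteq> {}" using tree_decomp_single_bag[OF sg] unfolding W_def by blast
  ultimately have "Min W \<in> W" by simp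
  then obtain N :: "nat set" and F B where "Min W = td_width N B" "tree_decomp V E N F B"
    unfolding W_def mem_Collect_eq by blast
  moreover have "treewidth V E = Min W" unfolding treewidth_def W_def ..
  ultimately show ?thesis by metis
qed

lemma tree_decomp_imp_bounded_decomp:
  assumes D: "tree_decomp V E N F B" and finV: "finite V" and K: "int K = td_width N B + 1"
  shows "bounded_decomp N F B V K"
proof -
  have "finite N" using D unfolding tree_decomp_def is_tree_def by simp
  then have "\<forall>t\<in>N. card (B t) \<le> K" using card_bag_le_td_width[of N _ B] K by fastforce
  moreover have "K \<le> card V" using td_width_bounds[OF D finV] K by linarith
  ultimately show ?thesis using D finV unfolding tree_decomp_def bounded_decomp_def by auto
qed

theorem proposition2p3:
  fixes V :: "'a set" and E :: "'a set set"
  assumes "finite_simple_graph V E"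
  shows "\<exists>(N :: nat set) F B r. rooted_tree_decomp V E N F B r"
proof -
  have finV: "finite V" using assms unfolding finite_simple_graph_def by simp
  obtain N :: "nat set" and F B where D: "tree_decomp V E N F B" and w: "td_width N B = treewidth V E"
    using treewidth_attained[OF assms] by blast
  define K where "K = nat (treewidth V E + 1)"
  have K: "int K = treewidth V E + 1" using td_width_bounds[OF D finV] w K_def by simp
  have "bounded_decomp N F B V K" using tree_decomp_imp_bounded_decomp[OF D finV] K w by simp
  then obtain n par B' where D': "ordered_decomp n par V K B'" and cover: "\<forall>t\<in>N. \<exists>i<n. B t \<subseteq> B' i"
    using bounded_decomp_imp_ordered_decomp by blast
  have "\<forall>e\<in>E. \<exists>i<n. e \<subseteq> B' i" using D cover unfolding tree_decomp_def by (meson subset_trans)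
  then have "rooted_tree_decomp V E {..<n} (parent_edges n par) B' 0"
    using ordered_decomp.rooted_tree_decomp[OF D' _ K] by blast
  then show ?thesis by blast
qed

end
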